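(* Let $\beta\in(0,1)$, $c>1-\beta$ and $\delta\in[0,1)$, and set $$E_N=\Big\{\sum_{i=\lceil N^\delta\rceil}^{N} w_i^\beta\le c^{-1}N^{1-\beta}\Big\}.$$ Then for every $\eta>0$, $\mathbb P(E_N)=o(N^{-\eta})$ as $N\to\infty$.
   Context: $\Xi$ is a Poisson point process on $(0,\infty)$ with intensity measure $x^{-2}dx$, and $w_1>w_2>\cdots$ are its atoms listed in decreasing order. *)

theory Defs
  imports "HOL-Probability.Probability" "HOL-Library.Landau_Symbols"
begin

definition inv_sq_intensity :: "real set \<Rightarrow> ennreal" where
  "inv_sq_intensity A = (\<integral>\<^sup>+ x. indicator ({0<..} \<inter> A) x * ennreal (1 / x\<^sup>2) \<partial>lborel)"

text \<open>w omega i (i = 0,1,2,...) is the (i+1)-st largest atom of a Poisson point process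
  on (0,oo) with intensity x^(-2) dx, i.e. w omega 0 = w_1 > w omega 1 = w_2 > ...\<close>
definition ppp_inv_sq :: "'a measure \<Rightarrow> ('a \<Rightarrow> nat \<Rightarrow> real) \<Rightarrow> bool" where
  "ppp_inv_sq M w \<longleftrightarrow>
     prob_space M \<and>
     (\<forall>i. (\<lambda>\<omega>. w \<omega> i) \<in> borel_measurable M) \<and>
     (\<forall>\<omega>\<in>space M. \<forall>i. 0 < w \<omega> i \<and> w \<omega> (Suc i) < w \<omega> i) \<and>
     (\<forall>(A :: nat \<Rightarrow> real set) (k :: nat).
        (\<forall>j<k. A j \<in> sets borel \<and> A j \<subseteq> {0<..} \<and> inv_sq_intensity (A j) < \<infinity>) \<and>
        disjoint_family_on A {..<k} \<longrightarrow>
          prob_space.indep_vars M (\<lambda>_. count_space (UNIV :: nat set))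
            (\<lambda>j \<omega>. card {i. w \<omega> i \<in> A j}) {..<k} \<and>
          (\<forall>j<k. \<forall>n::nat.
             measure M {\<omega>\<in>space M. card {i. w \<omega> i \<in> A j} = n}
               = enn2real (inv_sq_intensity (A j)) ^ n / fact n
                 * exp (- enn2real (inv_sq_intensity (A j)))))"

end

theory Submission
  imports Defs "HOL-Real_Asymp.Real_Asymp"
begin

text \<open>
  Write w_i for the i-th largest atom (this is w \<omega> (i - 1) below) and q = (1 - \<beta>) / c < 1.
  If w_i \<ge> 1 / (x i) for every i between \<theta> N and N, comparing \<Sum> i powr -\<beta> with the integral
  of t powr -\<beta> gives \<Sum> w_i powr \<beta> \<ge> x powr -\<beta> (1 - (2 \<theta>) powr (1 - \<beta>)) N powr (1 - \<beta>) / (1 - \<beta>),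
  which exceeds N powr (1 - \<beta>) / c = q N powr (1 - \<beta>) / (1 - \<beta>) for suitable x > 1 and \<theta> > 0.
  So on the event some i \<ge> \<theta> N has w_i < 1 / (x i), i.e. fewer than i atoms in [1 / (x i), \<infinity>).
  That count is Poisson with mean x i, so this has probability at most i exp (-(x - 1 - ln x) i),
  and a union bound over i \<le> N leaves a bound exponentially small in N.
\<close>

lemma inv_sq_intensity_atLeast:
  assumes "(s::real) > 0"
  shows "inv_sq_intensity {s..} = ennreal (1/s)"
proof -
  have eq: "(\<lambda>x. indicator ({0<..} \<inter> {s..}) x * ennreal (1 / x\<^sup>2)) =
            (\<lambda>x. ennreal (1 / x\<^sup>2) * indicator {s..} x)"
    using assms by (auto simp: fun_eq_iff split: split_indicator)
  have "(\<integral>\<^sup>+x. ennreal (1 / x\<^sup>2) * indicator {s..} x \<partial>lborel) = ennreal (0 - (- 1 / s))"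
  proof (rule nn_integral_FTC_atLeast)
    show "(\<lambda>x::real. 1 / x\<^sup>2) \<in> borel_measurable borel" by measurable
    fix x assume "s \<le> x"
    then have "x > 0" using assms by simp
    then show "((\<lambda>x. - 1 / x) has_real_derivative 1 / x\<^sup>2) (at x)"
      by (auto intro!: derivative_eq_intros simp: power2_eq_square field_simps)
    show "0 \<le> 1 / x\<^sup>2" by simp
  next
    show "((\<lambda>x::real. - 1 / x) \<longlongrightarrow> 0) at_top" by real_asymp
  qed
  then show ?thesis unfolding inv_sq_intensity_def eq by simp
qed

lemma ppp_inv_sq_prob_space: "ppp_inv_sq M w \<Longrightarrow> prob_space M"
  unfolding ppp_inv_sq_def by blast

lemma ppp_inv_sq_measurable:
  "ppp_inv_sq M w \<Longrightarrow> (\<lambda>\<omega>. w \<omega> i) \<in> borel_measurable M"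
  unfolding ppp_inv_sq_def by blast

lemma ppp_inv_sq_decseq: "ppp_inv_sq M w \<Longrightarrow> \<omega> \<in> space M \<Longrightarrow> decseq (w \<omega>)"
  unfolding ppp_inv_sq_def by (intro decseq_SucI less_imp_le) blast

lemma ppp_inv_sq_count_atLeast:
  assumes "ppp_inv_sq M w" and "s > 0"
  shows "(\<lambda>\<omega>. card {j. s \<le> w \<omega> j}) \<in> measurable M (count_space UNIV)"
    and "measure M {\<omega>\<in>space M. card {j. s \<le> w \<omega> j} = n} = (1/s) ^ n / fact n * exp (- (1/s))"
proof -
  let ?A = "\<lambda>_::nat. {s..}"
  have intensity: "inv_sq_intensity {s..} = ennreal (1/s)"
    using \<open>s > 0\<close> by (rule inv_sq_intensity_atLeast)
  have "(\<forall>j<1. ?A j \<in> sets borel \<and> ?A j \<subseteq> {0<..} \<and> inv_sq_intensity (?A j) < \<infinity>)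
      \<and> disjoint_family_on ?A {..<1}"
    using \<open>s > 0\<close> intensity by (auto simp: disjoint_family_on_def)
  then have "prob_space.indep_vars M (\<lambda>_. count_space UNIV) (\<lambda>j \<omega>. card {i. w \<omega> i \<in> ?A j}) {..<1}
      \<and> (\<forall>j<1. \<forall>n. measure M {\<omega>\<in>space M. card {i. w \<omega> i \<in> ?A j} = n}
          = enn2real (inv_sq_intensity (?A j)) ^ n / fact n * exp (- enn2real (inv_sq_intensity (?A j))))"
    by (rule assms(1)[unfolded ppp_inv_sq_def, THEN conjunct2, THEN conjunct2, THEN conjunct2,
          rule_format])
  then show "(\<lambda>\<omega>. card {j. s \<le> w \<omega> j}) \<in> measurable M (count_space UNIV)"
    and "measure M {\<omega>\<in>space M. card {j. s \<le> w \<omega> j} = n} = (1/s) ^ n / fact n * exp (- (1/s))"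
    using ppp_inv_sq_prob_space[OF assms(1)] \<open>s > 0\<close> intensity
    by (auto simp: prob_space.indep_vars_def)
qed

lemma decseq_card_ge_le:
  fixes f :: "nat \<Rightarrow> 'a::linorder"
  assumes "decseq f" and "f k < s"
  shows "card {j. s \<le> f j} \<le> k"
proof -
  have "{j. s \<le> f j} \<subseteq> {..<k}"
  proof
    fix j assume "j \<in> {j. s \<le> f j}"
    show "j \<in> {..<k}"
    proof (rule ccontr)
      assume "j \<notin> {..<k}"
      then have "k \<le> j" by simp
      with \<open>decseq f\<close> have "f j \<le> f k" by (rule decseqD)
      then show False using \<open>j \<in> {j. s \<le> f j}\<close> \<open>f k < s\<close> by simp
    qed
  qed
  then show ?thesis using card_mono[of "{..<k}"] by simp
qed

lemma ppp_inv_sq_prob_less_le: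
  assumes ppp: "ppp_inv_sq M w" and "s > 0"
  shows "measure M {\<omega>\<in>space M. w \<omega> k < s} \<le> (\<Sum>n\<le>k. (1/s) ^ n / fact n * exp (- (1/s)))"
proof -
  interpret prob_space M using ppp by (rule ppp_inv_sq_prob_space)
  define C where "C \<omega> = card {j. s \<le> w \<omega> j}" for \<omega>
  have C: "C \<in> measurable M (count_space UNIV)"
    unfolding C_def using ppp_inv_sq_count_atLeast(1)[OF assms] .
  have sets: "{\<omega>\<in>space M. C \<omega> = n} \<in> events" for n
    using C by measurable
  have "{\<omega>\<in>space M. w \<omega> k < s} \<subseteq> (\<Union>n\<le>k. {\<omega>\<in>space M. C \<omega> = n})"
  proof safe
    fix \<omega> assume "\<omega> \<in> space M" "w \<omega> k < s"
    then have "C \<omega> \<le> k"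
      unfolding C_def by (rule decseq_card_ge_le[OF ppp_inv_sq_decseq[OF ppp]])
    with \<open>\<omega> \<in> space M\<close> show "\<omega> \<in> (\<Union>n\<le>k. {\<omega>\<in>space M. C \<omega> = n})" by auto
  qed
  then have "prob {\<omega>\<in>space M. w \<omega> k < s} \<le> prob (\<Union>n\<le>k. {\<omega>\<in>space M. C \<omega> = n})"
    using sets by (intro finite_measure_mono) auto
  also have "\<dots> \<le> (\<Sum>n\<le>k. prob {\<omega>\<in>space M. C \<omega> = n})"
    using sets by (intro measure_UNION_le) auto
  finally show ?thesis
    unfolding C_def ppp_inv_sq_count_atLeast(2)[OF assms] .
qed

lemma power_div_fact_le_exp:
  assumes "(x::real) \<ge> 0"
  shows "x ^ n / fact n \<le> exp x"
proof -
  have "x ^ n / fact n \<le> (\<Sum>k\<le>n. x ^ k / fact k)"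
    by (rule member_le_sum) (use assms in auto)
  also have "\<dots> \<le> exp x"
    using assms summable_exp_generic[of x]
    by (auto simp: exp_def divide_inverse ac_simps intro!: sum_le_suminf)
  finally show ?thesis .
qed

lemma poisson_lower_tail:
  assumes "(x::real) \<ge> 1"
  shows "(\<Sum>n<i. (x * real i) ^ n / fact n * exp (- (x * real i)))
          \<le> real i * exp (- (x - 1 - ln x) * real i)"
proof -
  have "(x * real i) ^ n / fact n * exp (- (x * real i)) \<le> exp (- (x - 1 - ln x) * real i)"
    if "n < i" for n
  proof -
    have "(x * real i) ^ n / fact n = x ^ n * (real i ^ n / fact n)"
      by (simp add: power_mult_distrib)
    also have "\<dots> \<le> x ^ i * exp (real i)"
      by (intro mult_mono power_increasing power_div_fact_le_exp) (use assms that in auto)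
    also have "\<dots> = exp (ln x * real i + real i)"
      using assms powr_realpow[of x i] by (simp add: exp_add powr_def mult.commute)
    finally have "(x * real i) ^ n / fact n * exp (- (x * real i))
        \<le> exp (ln x * real i + real i) * exp (- (x * real i))"
      by (rule mult_right_mono) simp
    also have "\<dots> = exp (- (x - 1 - ln x) * real i)"
      by (simp add: exp_add[symmetric] algebra_simps)
    finally show ?thesis .
  qed
  then show ?thesis
    using sum_mono[of "{..<i}", where g = "\<lambda>_. exp (- (x - 1 - ln x) * real i)"] by simp
qed

lemma ppp_inv_sq_prob_atom_small:
  assumes "ppp_inv_sq M w" and "x \<ge> 1" and "i \<ge> 1"
  shows "measure M {\<omega>\<in>space M. w \<omega> (i - 1) < 1 / (x * real i)} \<le> real i * exp (- (x - 1 - ln x) * real i)"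
proof -
  have "{..i - 1} = {..<i}" using \<open>i \<ge> 1\<close> by auto
  then show ?thesis
    using ppp_inv_sq_prob_less_le[OF assms(1), of "1 / (x * real i)" "i - 1"]
      poisson_lower_tail[OF \<open>x \<ge> 1\<close>, of i] assms(2,3) by simp
qed

lemma powr_one_minus_diff_le:
  assumes "(x::real) > 0" and "0 \<le> b" and "b < 1"
  shows "(x + 1) powr (1 - b) - x powr (1 - b) \<le> (1 - b) * x powr (- b)"
proof -
  have "\<exists>z. x < z \<and> z < x + 1 \<and>
      (x + 1) powr (1 - b) - x powr (1 - b) = (x + 1 - x) * ((1 - b) * z powr (1 - b - 1))"
  proof (rule MVT2)
    fix y assume "x \<le> y" "y \<le> x + 1"
    then have "y > 0" using assms by simp
    then show "((\<lambda>z. z powr (1 - b)) has_real_derivative (1 - b) * y powr (1 - b - 1)) (at y)"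
      by (rule has_real_derivative_powr)
  qed simp
  then obtain z where z: "x < z" "(x + 1) powr (1 - b) - x powr (1 - b) = (1 - b) * z powr (- b)"
    by auto
  have "z powr (- b) \<le> x powr (- b)" using z assms by (intro powr_mono2') auto
  then show ?thesis using z assms by simp
qed

lemma sum_powr_ge_integral:
  assumes "0 \<le> b" and "b < 1" and "1 \<le> m" and "m \<le> N"
  shows "((real N + 1) powr (1 - b) - real m powr (1 - b)) / (1 - b) \<le> (\<Sum>i=m..N. real i powr (- b))"
  using \<open>m \<le> N\<close>
proof (induction N rule: dec_induct)
  case base
  have "(real m + 1) powr (1 - b) - real m powr (1 - b) \<le> (1 - b) * real m powr (- b)"
    using assms by (intro powr_one_minus_diff_le) auto
  then show ?case using assms by (simp add: divide_le_eq mult.commute)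
next
  case (step n)
  have "(real n + 1 + 1) powr (1 - b) - (real n + 1) powr (1 - b) \<le> (1 - b) * (real n + 1) powr (- b)"
    using assms by (intro powr_one_minus_diff_le) auto
  then have "((real n + 1 + 1) powr (1 - b) - (real n + 1) powr (1 - b)) / (1 - b) \<le> (real n + 1) powr (- b)"
    using assms by (simp add: divide_le_eq mult.commute)
  with step show ?case
    by (simp add: diff_divide_distrib add.commute)
qed

lemma sum_powr_ge_of_ge_inverse_mult:
  fixes v :: "nat \<Rightarrow> real"
  assumes "0 < \<beta>" and "\<beta> < 1" and "x > 0" and "1 \<le> b" and "b \<le> N" and "a \<le> b"
    and "\<And>i. i \<in> {b..N} \<Longrightarrow> 1 / (x * real i) \<le> v i"
  shows "x powr (- \<beta>) * ((real N + 1) powr (1 - \<beta>) - real b powr (1 - \<beta>)) / (1 - \<beta>)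
           \<le> (\<Sum>i=a..N. v i powr \<beta>)"
proof -
  have "x powr (- \<beta>) * ((real N + 1) powr (1 - \<beta>) - real b powr (1 - \<beta>)) / (1 - \<beta>)
      \<le> x powr (- \<beta>) * (\<Sum>i=b..N. real i powr (- \<beta>))"
    unfolding times_divide_eq_right[symmetric] using assms
    by (intro mult_left_mono sum_powr_ge_integral) auto
  also have "\<dots> = (\<Sum>i=b..N. (1 / (x * real i)) powr \<beta>)"
    unfolding sum_distrib_left using assms
    by (intro sum.cong refl) (auto simp: powr_minus_divide powr_mult powr_divide)
  also have "\<dots> \<le> (\<Sum>i=b..N. v i powr \<beta>)"
    using assms by (intro sum_mono powr_mono2) auto
  also have "\<dots> \<le> (\<Sum>i=a..N. v i powr \<beta>)"
    using \<open>a \<le> b\<close> by (intro sum_mono2) auto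
  finally show ?thesis .
qed

lemma ppp_inv_sq_prob_small_sum_le:
  assumes ppp: "ppp_inv_sq M w" and "0 < \<beta>" and "\<beta> < 1" and "x \<ge> 1"
    and "1 \<le> b" and "b \<le> N" and "a \<le> b"
    and L: "L < x powr (- \<beta>) * ((real N + 1) powr (1 - \<beta>) - real b powr (1 - \<beta>)) / (1 - \<beta>)"
  shows "measure M {\<omega>\<in>space M. (\<Sum>i=a..N. w \<omega> (i - 1) powr \<beta>) \<le> L}
           \<le> (real N + 1) * real N * exp (- (x - 1 - ln x) * real b)"
proof -
  interpret prob_space M using ppp by (rule ppp_inv_sq_prob_space)
  define small where "small i = {\<omega>\<in>space M. w \<omega> (i - 1) < 1 / (x * real i)}" for i
  have events: "small i \<in> events" for i
    unfolding small_def using ppp_inv_sq_measurable[OF ppp, of "i - 1"] by measurable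
  have "{\<omega>\<in>space M. (\<Sum>i=a..N. w \<omega> (i - 1) powr \<beta>) \<le> L} \<subseteq> (\<Union>i\<in>{b..N}. small i)"
  proof
    fix \<omega> assume \<omega>: "\<omega> \<in> {\<omega>\<in>space M. (\<Sum>i=a..N. w \<omega> (i - 1) powr \<beta>) \<le> L}"
    show "\<omega> \<in> (\<Union>i\<in>{b..N}. small i)"
    proof (rule ccontr)
      assume "\<omega> \<notin> (\<Union>i\<in>{b..N}. small i)"
      then have "\<And>i. i \<in> {b..N} \<Longrightarrow> 1 / (x * real i) \<le> w \<omega> (i - 1)"
        using \<omega> by (auto simp: small_def not_less)
      then have "x powr (- \<beta>) * ((real N + 1) powr (1 - \<beta>) - real b powr (1 - \<beta>)) / (1 - \<beta>)
          \<le> (\<Sum>i=a..N. w \<omega> (i - 1) powr \<beta>)"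
        using assms by (intro sum_powr_ge_of_ge_inverse_mult) auto
      then show False using \<omega> L by simp
    qed
  qed
  then have "prob {\<omega>\<in>space M. (\<Sum>i=a..N. w \<omega> (i - 1) powr \<beta>) \<le> L} \<le> prob (\<Union>i\<in>{b..N}. small i)"
    using events by (intro finite_measure_mono) auto
  also have "\<dots> \<le> (\<Sum>i=b..N. prob (small i))"
    using events by (intro measure_UNION_le) auto
  also have "\<dots> \<le> (\<Sum>i=b..N. real N * exp (- (x - 1 - ln x) * real b))"
  proof (rule sum_mono)
    fix i assume i: "i \<in> {b..N}"
    have "prob (small i) \<le> real i * exp (- (x - 1 - ln x) * real i)"
      unfolding small_def using assms i by (intro ppp_inv_sq_prob_atom_small) auto
    also have "\<dots> \<le> real N * exp (- (x - 1 - ln x) * real b)"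
    proof -
      have "(x - 1 - ln x) * real b \<le> (x - 1 - ln x) * real i"
        using i ln_le_minus_one[of x] \<open>x \<ge> 1\<close> by (intro mult_left_mono) auto
      then have "exp (- (x - 1 - ln x) * real i) \<le> exp (- (x - 1 - ln x) * real b)"
        unfolding exp_le_cancel_iff mult_minus_left by linarith
      then show ?thesis by (rule mult_mono[rotated]) (use i in auto)
    qed
    finally show "prob (small i) \<le> real N * exp (- (x - 1 - ln x) * real b)" .
  qed
  also have "\<dots> \<le> (real N + 1) * real N * exp (- (x - 1 - ln x) * real b)"
    by (simp add: mult.assoc mult_right_mono)
  finally show ?thesis .
qed

lemma exists_powr_margin:
  fixes q \<beta> :: real
  assumes "0 < q" and "q < 1" and "0 < \<beta>" and "\<beta> < 1"
  obtains x \<theta> where "1 < x" and "0 < \<theta>" and "2 * \<theta> \<le> 1"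
    and "q < x powr (- \<beta>) * (1 - (2 * \<theta>) powr (1 - \<beta>))"
proof -
  define x where "x = 1 + ((1 + q) / (2 * q) - 1) / 2"
  define \<theta> where "\<theta> = ((1 - q) / 2) powr (1 / (1 - \<beta>)) / 2"
  have x: "1 < x" "2 * q * x < 1 + q"
    using assms by (auto simp: x_def field_simps)
  have "0 < \<theta>" using assms by (simp add: \<theta>_def)
  have "((1 - q) / 2) powr (1 / (1 - \<beta>)) \<le> 1 powr (1 / (1 - \<beta>))"
    using assms by (intro powr_mono2) auto
  then have "2 * \<theta> \<le> 1" by (simp add: \<theta>_def)
  have "x powr \<beta> \<le> x powr 1" using x assms by (intro powr_mono) auto
  then have "1 / x \<le> x powr (- \<beta>)" using x by (simp add: powr_minus_divide divide_simps)
  have \<theta>_powr: "(2 * \<theta>) powr (1 - \<beta>) = (1 - q) / 2"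
    using assms by (simp add: \<theta>_def powr_powr)
  have "q < 1 / x * ((1 + q) / 2)"
    using x assms by (simp add: field_simps)
  also have "\<dots> \<le> x powr (- \<beta>) * ((1 + q) / 2)"
    using \<open>1 / x \<le> x powr (- \<beta>)\<close> assms by (intro mult_right_mono) auto
  also have "\<dots> = x powr (- \<beta>) * (1 - (2 * \<theta>) powr (1 - \<beta>))"
    using \<theta>_powr by simp
  finally have "q < x powr (- \<beta>) * (1 - (2 * \<theta>) powr (1 - \<beta>))" .
  then show ?thesis by (rule that[OF x(1) \<open>0 < \<theta>\<close> \<open>2 * \<theta> \<le> 1\<close>])
qed

lemma ppp_inv_sq_prob_small_sum_le_exp:
  assumes "ppp_inv_sq M w" and "0 < \<beta>" and "\<beta> < 1" and "1 < x" and "0 < \<theta>" and "2 * \<theta> \<le> 1"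
    and margin: "q < x powr (- \<beta>) * (1 - (2 * \<theta>) powr (1 - \<beta>))"
    and N: "1 \<le> \<theta> * real N" and "a \<le> nat \<lceil>\<theta> * real N\<rceil>"
  shows "measure M {\<omega>\<in>space M. (\<Sum>i=a..N. w \<omega> (i - 1) powr \<beta>) \<le> q * real N powr (1 - \<beta>) / (1 - \<beta>)}
           \<le> (real N + 1) * real N * exp (- (x - 1 - ln x) * \<theta> * real N)"
proof -
  define b where "b = nat \<lceil>\<theta> * real N\<rceil>"
  have "\<theta> * real N \<le> real b" "real b \<le> \<theta> * real N + 1"
    unfolding b_def using N of_int_ceiling_le_add_one[of "\<theta> * real N"] by auto
  then have b: "\<theta> * real N \<le> real b" "real b \<le> 2 * \<theta> * real N"
    using N by linarith+
  have "real b \<le> real N" using b \<open>2 * \<theta> \<le> 1\<close> mult_right_mono[of "2 * \<theta>" 1 "real N"] by auto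
  then have "1 \<le> b" "b \<le> N" using b N by auto
  have "0 < real N" using N \<open>0 < \<theta>\<close> by (cases N) auto
  have "real b powr (1 - \<beta>) \<le> (2 * \<theta> * real N) powr (1 - \<beta>)"
    using b \<open>0 < \<theta>\<close> \<open>\<beta> < 1\<close> by (intro powr_mono2) auto
  moreover have "real N powr (1 - \<beta>) \<le> (real N + 1) powr (1 - \<beta>)"
    using \<open>\<beta> < 1\<close> by (intro powr_mono2) auto
  ultimately have "(1 - (2 * \<theta>) powr (1 - \<beta>)) * real N powr (1 - \<beta>)
      \<le> (real N + 1) powr (1 - \<beta>) - real b powr (1 - \<beta>)"
    using \<open>0 < \<theta>\<close> by (simp add: powr_mult algebra_simps)
  from mult_left_mono[OF this, of "x powr (- \<beta>)"]
  have "x powr (- \<beta>) * (1 - (2 * \<theta>) powr (1 - \<beta>)) * real N powr (1 - \<beta>)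
      \<le> x powr (- \<beta>) * ((real N + 1) powr (1 - \<beta>) - real b powr (1 - \<beta>))"
    by (simp add: mult.assoc)
  moreover have "q * real N powr (1 - \<beta>)
      < x powr (- \<beta>) * (1 - (2 * \<theta>) powr (1 - \<beta>)) * real N powr (1 - \<beta>)"
    using margin \<open>0 < real N\<close> by (intro mult_strict_right_mono) auto
  ultimately have gap: "q * real N powr (1 - \<beta>) / (1 - \<beta>)
      < x powr (- \<beta>) * ((real N + 1) powr (1 - \<beta>) - real b powr (1 - \<beta>)) / (1 - \<beta>)"
    using \<open>\<beta> < 1\<close> by (intro divide_strict_right_mono) auto
  have "measure M {\<omega>\<in>space M. (\<Sum>i=a..N. w \<omega> (i - 1) powr \<beta>) \<le> q * real N powr (1 - \<beta>) / (1 - \<beta>)}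
      \<le> (real N + 1) * real N * exp (- (x - 1 - ln x) * real b)"
    using assms \<open>1 \<le> b\<close> \<open>b \<le> N\<close> gap unfolding b_def
    by (intro ppp_inv_sq_prob_small_sum_le) auto
  also have "\<dots> \<le> (real N + 1) * real N * exp (- (x - 1 - ln x) * \<theta> * real N)"
  proof -
    have "(x - 1 - ln x) * (\<theta> * real N) \<le> (x - 1 - ln x) * real b"
      using b ln_le_minus_one[of x] \<open>1 < x\<close> by (intro mult_left_mono) auto
    then have "exp (- (x - 1 - ln x) * real b) \<le> exp (- (x - 1 - ln x) * \<theta> * real N)"
      unfolding exp_le_cancel_iff mult_minus_left mult.assoc by (rule le_imp_neg_le)
    then show ?thesis by (rule mult_left_mono) simp
  qed
  finally show ?thesis .
qed

theorem lemma4p2: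
  fixes M :: "'a measure" and w :: "'a \<Rightarrow> nat \<Rightarrow> real" and \<beta> c \<delta> :: real
  assumes "ppp_inv_sq M w"
    and "0 < \<beta>" and "\<beta> < 1" and "c > 1 - \<beta>" and "0 \<le> \<delta>" and "\<delta> < 1"
  shows "\<forall>\<eta>>0. (\<lambda>N::nat. measure M {\<omega>\<in>space M.
            (\<Sum>i\<in>{nat \<lceil>real N powr \<delta>\<rceil>..N}. w \<omega> (i - 1) powr \<beta>) \<le> real N powr (1 - \<beta>) / c})
          \<in> o(\<lambda>N. real N powr (- \<eta>))"
proof (intro allI impI)
  fix \<eta> :: real assume "\<eta> > 0"
  define q where "q = (1 - \<beta>) / c"
  have "0 < q" "q < 1" using assms by (auto simp: q_def divide_less_eq)
  then obtain x \<theta> where x: "1 < x" and \<theta>: "0 < \<theta>" "2 * \<theta> \<le> 1"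
    and margin: "q < x powr (- \<beta>) * (1 - (2 * \<theta>) powr (1 - \<beta>))"
    using exists_powr_margin assms by blast
  define \<gamma> where "\<gamma> = x - 1 - ln x"
  define h where "h N = (real N + 1) * real N * exp (- \<gamma> * \<theta> * real N)" for N :: nat
  have "\<gamma> > 0" using ln_add_one_self_less_self[of "x - 1"] x by (simp add: \<gamma>_def)
  then have h: "h \<in> o(\<lambda>N. real N powr (- \<eta>))"
    unfolding h_def using \<theta> \<open>\<eta> > 0\<close> by real_asymp
  have "eventually (\<lambda>N::nat. 1 \<le> \<theta> * real N) at_top"
    and "eventually (\<lambda>N::nat. real N powr \<delta> \<le> \<theta> * real N) at_top"
    using \<theta> \<open>\<delta> < 1\<close> by real_asymp+
  note large_N = eventually_conj[OF this]
  show "(\<lambda>N::nat. measure M {\<omega>\<in>space M.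
            (\<Sum>i\<in>{nat \<lceil>real N powr \<delta>\<rceil>..N}. w \<omega> (i - 1) powr \<beta>) \<le> real N powr (1 - \<beta>) / c})
          \<in> o(\<lambda>N. real N powr (- \<eta>))"
  proof (rule landau_o.big_small_trans[OF bigoI[where c = 1] h], use large_N in eventually_elim)
    case (elim N)
    have "real N powr (1 - \<beta>) / c = q * real N powr (1 - \<beta>) / (1 - \<beta>)"
      using assms by (simp add: q_def)
    moreover have "nat \<lceil>real N powr \<delta>\<rceil> \<le> nat \<lceil>\<theta> * real N\<rceil>"
      using elim by (intro nat_mono ceiling_mono) auto
    ultimately show ?case
      using ppp_inv_sq_prob_small_sum_le_exp[OF assms(1-3) x \<theta> margin] elim
      by (simp add: h_def \<gamma>_def)
  qed
qed

end
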